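(* Let $V$ be a crossed module and $M$ an abelian $\pi_0(V)$-module. A $2$-cochain $z\in C^2(V,M)$ is a $2$-cocycle if and only if: (a) $z(m,h,g)=z_M(m)-z_G(\mu(m),h)+z_G(h,g)$ for all $m\in M_V$, $g,h\in G_V$; (b) $z_G\in Z^2(G_V,M)$ (group $2$-cocycle, $G_V$ acting on $M$ via $G_V\to\pi_0(V)$); (c) $z_M(nm)=z_M(n)+z_M(m)-z_G(\mu(n),\mu(m))$ for all $m,n\in M_V$; (d) $z_M({}^gm)=\bar g\cdot z_M(m)+z_G(\mu({}^gm),g)-z_G(g,\mu(m))$ for all $m\in M_V$, $g\in G_V$.
   Context: Crossed module $V$: group $G_V$, group $M_V$ with left $G_V$-action ${}^gm$, homomorphism $\mu:M_V\to G_V$ with $\mu({}^gm)=g\mu(m)g^{-1}$, ${}^{\mu(n)}m=nmn^{-1}$; $\pi_0(V)=G_V/\mu(M_V)$, $\bar g$ the class of $g$. The cochain complex of $V$ with coefficients in $M$ has $C^2(V,M)=\mathrm{Map}(M_V\times G_V\times G_V,M)$, $C^3(V,M)=\mathrm{Map}(M_V\times M_V\times G_V\times M_V\times G_V\times G_V,M)$, with $(dc)(p,n,k,m,h,g)=c(p,\mu(n)k,\mu(m)h)-c(pn,k,hg)+c(n\,{}^km,kh,g)-\bar k\cdot c(m,h,g)$; $Z^2(V,M)$ is the kernel. For $c\in C^2(V,M)$: module part $c_M(m):=c(m,1,1)$, group part $c_G(h,g):=c(1,h,g)$. Group cochains: $C^2(\Pi,M)=\mathrm{Map}(\Pi^2,M)$,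 $(dc)(r,q,p)=c(r,q)-c(r,qp)+c(rq,p)-r\cdot c(q,p)$. *)

theory Defs
  imports "HOL-Algebra.Algebra"
begin

locale crossed_module = G: group G + M: group Mv
  for G :: "('g, 'c) monoid_scheme" (structure) and Mv :: "('m, 'd) monoid_scheme"
  and act :: "'g \<Rightarrow> 'm \<Rightarrow> 'm" and mu :: "'m \<Rightarrow> 'g" +
  assumes mu_hom: "mu \<in> hom Mv G"
    and act_closed: "\<lbrakk>g \<in> carrier G; m \<in> carrier Mv\<rbrakk> \<Longrightarrow> act g m \<in> carrier Mv"
    and act_one: "m \<in> carrier Mv \<Longrightarrow> act \<one>\<^bsub>G\<^esub> m = m"
    and act_mult: "\<lbrakk>g \<in> carrier G; h \<in> carrier G; m \<in> carrier Mv\<rbrakk> \<Longrightarrow>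
        act (g \<otimes>\<^bsub>G\<^esub> h) m = act g (act h m)"
    and act_hom: "\<lbrakk>g \<in> carrier G; m \<in> carrier Mv; n \<in> carrier Mv\<rbrakk> \<Longrightarrow>
        act g (m \<otimes>\<^bsub>Mv\<^esub> n) = act g m \<otimes>\<^bsub>Mv\<^esub> act g n"
    and peiffer1: "\<lbrakk>g \<in> carrier G; m \<in> carrier Mv\<rbrakk> \<Longrightarrow>
        mu (act g m) = g \<otimes>\<^bsub>G\<^esub> mu m \<otimes>\<^bsub>G\<^esub> inv\<^bsub>G\<^esub> g"
    and peiffer2: "\<lbrakk>n \<in> carrier Mv; m \<in> carrier Mv\<rbrakk> \<Longrightarrow>
        act (mu n) m = n \<otimes>\<^bsub>Mv\<^esub> m \<otimes>\<^bsub>Mv\<^esub> inv\<^bsub>Mv\<^esub> n"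

definition pi0 :: "('g, 'c) monoid_scheme \<Rightarrow> ('m, 'd) monoid_scheme \<Rightarrow> ('m \<Rightarrow> 'g) \<Rightarrow> 'g set monoid" where
  "pi0 G Mv mu = G Mod (mu ` carrier Mv)"

definition cls :: "('g, 'c) monoid_scheme \<Rightarrow> ('m, 'd) monoid_scheme \<Rightarrow> ('m \<Rightarrow> 'g) \<Rightarrow> 'g \<Rightarrow> 'g set" where
  "cls G Mv mu g = (mu ` carrier Mv) #>\<^bsub>G\<^esub> g"

definition pi0_module :: "('g, 'c) monoid_scheme \<Rightarrow> ('m, 'd) monoid_scheme \<Rightarrow> ('m \<Rightarrow> 'g)
    \<Rightarrow> ('g set \<Rightarrow> 'a::ab_group_add \<Rightarrow> 'a) \<Rightarrow> bool" where
  "pi0_module G Mv mu rho \<longleftrightarrow>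
     (\<forall>U \<in> carrier (pi0 G Mv mu). \<forall>a b. rho U (a + b) = rho U a + rho U b) \<and>
     (\<forall>a. rho \<one>\<^bsub>pi0 G Mv mu\<^esub> a = a) \<and>
     (\<forall>U \<in> carrier (pi0 G Mv mu). \<forall>W \<in> carrier (pi0 G Mv mu). \<forall>a.
        rho (U \<otimes>\<^bsub>pi0 G Mv mu\<^esub> W) a = rho U (rho W a))"

text \<open>Differential C^2(V,M) -> C^3(V,M); a 2-cochain is a map M_V x G_V x G_V -> M (curried).\<close>
definition cm_d2 :: "('g, 'c) monoid_scheme \<Rightarrow> ('m, 'd) monoid_scheme \<Rightarrow> ('g \<Rightarrow> 'm \<Rightarrow> 'm)
    \<Rightarrow> ('m \<Rightarrow> 'g) \<Rightarrow> ('g set \<Rightarrow> 'a::ab_group_add \<Rightarrow> 'a) \<Rightarrow> ('m \<Rightarrow> 'g \<Rightarrow> 'g \<Rightarrow> 'a)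
    \<Rightarrow> 'm \<Rightarrow> 'm \<Rightarrow> 'g \<Rightarrow> 'm \<Rightarrow> 'g \<Rightarrow> 'g \<Rightarrow> 'a" where
  "cm_d2 G Mv act mu rho c p n k m h g =
     c p (mu n \<otimes>\<^bsub>G\<^esub> k) (mu m \<otimes>\<^bsub>G\<^esub> h)
   - c (p \<otimes>\<^bsub>Mv\<^esub> n) k (h \<otimes>\<^bsub>G\<^esub> g)
   + c (n \<otimes>\<^bsub>Mv\<^esub> act k m) (k \<otimes>\<^bsub>G\<^esub> h) g
   - rho (cls G Mv mu k) (c m h g)"

definition cm_Z2 :: "('g, 'c) monoid_scheme \<Rightarrow> ('m, 'd) monoid_scheme \<Rightarrow> ('g \<Rightarrow> 'm \<Rightarrow> 'm)
    \<Rightarrow> ('m \<Rightarrow> 'g) \<Rightarrow> ('g set \<Rightarrow> 'a::ab_group_add \<Rightarrow> 'a) \<Rightarrow> ('m \<Rightarrow> 'g \<Rightarrow> 'g \<Rightarrow> 'a) \<Rightarrow> bool" where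
  "cm_Z2 G Mv act mu rho c \<longleftrightarrow>
     (\<forall>p \<in> carrier Mv. \<forall>n \<in> carrier Mv. \<forall>k \<in> carrier G. \<forall>m \<in> carrier Mv.
      \<forall>h \<in> carrier G. \<forall>g \<in> carrier G. cm_d2 G Mv act mu rho c p n k m h g = 0)"

definition cM :: "('g, 'c) monoid_scheme \<Rightarrow> ('m \<Rightarrow> 'g \<Rightarrow> 'g \<Rightarrow> 'a) \<Rightarrow> 'm \<Rightarrow> 'a" where
  "cM G c m = c m \<one>\<^bsub>G\<^esub> \<one>\<^bsub>G\<^esub>"

definition cG :: "('m, 'd) monoid_scheme \<Rightarrow> ('m \<Rightarrow> 'g \<Rightarrow> 'g \<Rightarrow> 'a) \<Rightarrow> 'g \<Rightarrow> 'g \<Rightarrow> 'a" where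
  "cG Mv c h g = c \<one>\<^bsub>Mv\<^esub> h g"

definition grp_d2 :: "('p, 'e) monoid_scheme \<Rightarrow> ('p \<Rightarrow> 'a::ab_group_add \<Rightarrow> 'a) \<Rightarrow> ('p \<Rightarrow> 'p \<Rightarrow> 'a)
    \<Rightarrow> 'p \<Rightarrow> 'p \<Rightarrow> 'p \<Rightarrow> 'a" where
  "grp_d2 P actM c r q p = c r q - c r (q \<otimes>\<^bsub>P\<^esub> p) + c (r \<otimes>\<^bsub>P\<^esub> q) p - actM r (c q p)"

definition grp_Z2 :: "('p, 'e) monoid_scheme \<Rightarrow> ('p \<Rightarrow> 'a::ab_group_add \<Rightarrow> 'a) \<Rightarrow> ('p \<Rightarrow> 'p \<Rightarrow> 'a) \<Rightarrow> bool" where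
  "grp_Z2 P actM c \<longleftrightarrow>
     (\<forall>r \<in> carrier P. \<forall>q \<in> carrier P. \<forall>p \<in> carrier P. grp_d2 P actM c r q p = 0)"

end

theory Submission
  imports Defs
begin

(* The forward direction evaluates the coboundary dz at tuples in which all but a
   few arguments are units; each of (a)-(d) is one such evaluation.  For the converse
   the key identity expresses dz(p,n,k,m,h,g), after rewriting z via (a), (c), (d), as
   a signed sum of six group coboundaries of z_G; by (b) every one of them vanishes. *)

context crossed_module
begin

lemma mu_group_hom: "group_hom Mv G mu"
  by (simp add: group_hom.intro group_hom_axioms.intro G.group_axioms M.group_axioms mu_hom)

lemma mu_closed [simp]: "m \<in> carrier Mv \<Longrightarrow> mu m \<in> carrier G"
  using mu_hom by (auto simp: hom_def)

lemma mu_mult [simp]: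
  "m \<in> carrier Mv \<Longrightarrow> n \<in> carrier Mv \<Longrightarrow> mu (m \<otimes>\<^bsub>Mv\<^esub> n) = mu m \<otimes> mu n"
  using mu_hom by (auto simp: hom_def)

lemma mu_one [simp]: "mu \<one>\<^bsub>Mv\<^esub> = \<one>"
  using group_hom.hom_one[OF mu_group_hom] .

lemma mu_act_commute:
  assumes "g \<in> carrier G" "m \<in> carrier Mv"
  shows "mu (act g m) \<otimes> g = g \<otimes> mu m"
  using peiffer1[OF assms] assms by (simp add: G.m_assoc)

lemma act_unit [simp]: "g \<in> carrier G \<Longrightarrow> act g \<one>\<^bsub>Mv\<^esub> = \<one>\<^bsub>Mv\<^esub>"
  using act_hom[of g "\<one>\<^bsub>Mv\<^esub>" "\<one>\<^bsub>Mv\<^esub>"] act_closed[of g "\<one>\<^bsub>Mv\<^esub>"]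
  by (metis M.l_cancel_one M.one_closed M.r_one)

lemma cls_carrier: "g \<in> carrier G \<Longrightarrow> cls G Mv mu g \<in> carrier (pi0 G Mv mu)"
  by (auto simp: cls_def pi0_def FactGroup_def RCOSETS_def)

lemma cls_mu: "m \<in> carrier Mv \<Longrightarrow> cls G Mv mu (mu m) = \<one>\<^bsub>pi0 G Mv mu\<^esub>"
  unfolding cls_def pi0_def FactGroup_def
  using subgroup.rcos_const[OF group_hom.img_is_subgroup[OF mu_group_hom] G.group_axioms]
  by auto

end

locale crossed_module_coefficients = crossed_module G Mv act mu
  for G :: "('g, 'c) monoid_scheme" (structure) and Mv :: "('m, 'd) monoid_scheme"
  and act :: "'g \<Rightarrow> 'm \<Rightarrow> 'm" and mu :: "'m \<Rightarrow> 'g" +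
  fixes rho :: "'g set \<Rightarrow> 'a::ab_group_add \<Rightarrow> 'a"
  assumes pi0_module: "pi0_module G Mv mu rho"
begin

abbreviation gact :: "'g \<Rightarrow> 'a \<Rightarrow> 'a" where
  "gact g \<equiv> rho (cls G Mv mu g)"

lemma gact_additive: "g \<in> carrier G \<Longrightarrow> additive (gact g)"
  using pi0_module cls_carrier by (auto simp: pi0_module_def additive_def)

lemma gact_mu [simp]: "m \<in> carrier Mv \<Longrightarrow> gact (mu m) a = a"
  using pi0_module cls_mu by (simp add: pi0_module_def)

lemma gact_one [simp]: "gact \<one> a = a"
  using gact_mu[OF M.one_closed] by simp

context
  fixes z :: "'m \<Rightarrow> 'g \<Rightarrow> 'g \<Rightarrow> 'a"
  assumes cocycle: "cm_Z2 G Mv act mu rho z"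
begin

lemma cocycle_d2_zero:
  "\<lbrakk>p \<in> carrier Mv; n \<in> carrier Mv; k \<in> carrier G; m \<in> carrier Mv; h \<in> carrier G;
    g \<in> carrier G\<rbrakk> \<Longrightarrow> cm_d2 G Mv act mu rho z p n k m h g = 0"
  using cocycle unfolding cm_Z2_def by blast

lemma cocycle_trivial_group_arg:
  "\<lbrakk>m \<in> carrier Mv; x \<in> carrier G\<rbrakk> \<Longrightarrow> z m \<one> x = cM G z m"
  using cocycle_d2_zero[of m "\<one>\<^bsub>Mv\<^esub>" \<one> "\<one>\<^bsub>Mv\<^esub>" \<one> x]
  by (simp add: cm_d2_def cM_def act_one)

lemma cocycle_split:
  assumes "m \<in> carrier Mv" "h \<in> carrier G" "g \<in> carrier G"
  shows "z m h g = cM G z m - cG Mv z (mu m) h + cG Mv z h g"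
  using cocycle_d2_zero[of "\<one>\<^bsub>Mv\<^esub>" m \<one> "\<one>\<^bsub>Mv\<^esub>" h g] assms
    cocycle_trivial_group_arg[of m "h \<otimes> g"]
  by (simp add: cm_d2_def cG_def act_one algebra_simps)

lemma cocycle_group_part: "grp_Z2 G gact (cG Mv z)"
  unfolding grp_Z2_def
proof (intro ballI)
  fix r q p assume "r \<in> carrier G" "q \<in> carrier G" "p \<in> carrier G"
  then show "grp_d2 G gact (cG Mv z) r q p = 0"
    using cocycle_d2_zero[of "\<one>\<^bsub>Mv\<^esub>" "\<one>\<^bsub>Mv\<^esub>" r "\<one>\<^bsub>Mv\<^esub>" q p]
    by (simp add: grp_d2_def cm_d2_def cG_def)
qed

lemma cocycle_group_part_one:
  assumes "x \<in> carrier G"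
  shows "cG Mv z x \<one> = gact x (cG Mv z \<one> \<one>)"
proof -
  have "grp_d2 G gact (cG Mv z) x \<one> \<one> = 0"
    using cocycle_group_part assms by (simp add: grp_Z2_def)
  then show ?thesis using assms by (simp add: grp_d2_def)
qed

lemma cocycle_module_mult:
  assumes "n \<in> carrier Mv" "m \<in> carrier Mv"
  shows "cM G z (n \<otimes>\<^bsub>Mv\<^esub> m) = cM G z n + cM G z m - cG Mv z (mu n) (mu m)"
  using cocycle_d2_zero[of n m \<one> "\<one>\<^bsub>Mv\<^esub>" \<one> \<one>] assms
    cocycle_split[of n "mu m" \<one>] cocycle_group_part_one[of "mu m"]
  by (simp add: cm_d2_def cM_def cG_def act_one algebra_simps)

lemma cocycle_module_action:
  assumes "m \<in> carrier Mv" "g \<in> carrier G"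
  shows "cM G z (act g m) = gact g (cM G z m) + cG Mv z (mu (act g m)) g - cG Mv z g (mu m)"
  using cocycle_d2_zero[of "\<one>\<^bsub>Mv\<^esub>" "\<one>\<^bsub>Mv\<^esub>" g m \<one> \<one>] assms
    cocycle_split[of "act g m" g \<one>] act_closed[OF assms(2,1)]
  by (simp add: cm_d2_def cM_def cG_def algebra_simps)

end

lemma d2_as_group_coboundaries:
  fixes z :: "'m \<Rightarrow> 'g \<Rightarrow> 'g \<Rightarrow> 'a"
  defines "c \<equiv> cG Mv z" and "zM \<equiv> cM G z" and "\<delta> \<equiv> grp_d2 G gact (cG Mv z)"
  assumes split: "\<And>m h g. \<lbrakk>m \<in> carrier Mv; h \<in> carrier G; g \<in> carrier G\<rbrakk> \<Longrightarrow>
      z m h g = zM m - c (mu m) h + c h g"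
    and mult: "\<And>n m. \<lbrakk>n \<in> carrier Mv; m \<in> carrier Mv\<rbrakk> \<Longrightarrow>
      zM (n \<otimes>\<^bsub>Mv\<^esub> m) = zM n + zM m - c (mu n) (mu m)"
    and action: "\<And>m g. \<lbrakk>m \<in> carrier Mv; g \<in> carrier G\<rbrakk> \<Longrightarrow>
      zM (act g m) = gact g (zM m) + c (mu (act g m)) g - c g (mu m)"
    and p: "p \<in> carrier Mv" and n: "n \<in> carrier Mv" and k: "k \<in> carrier G"
    and m: "m \<in> carrier Mv" and h: "h \<in> carrier G" and g: "g \<in> carrier G"
  shows "cm_d2 G Mv act mu rho z p n k m h g =
      \<delta> (mu p) (mu n) k + \<delta> k h g - \<delta> k (mu m) h + \<delta> (mu n) k (mu m \<otimes> h)
    - \<delta> (mu n) (mu (act k m)) (k \<otimes> h) + \<delta> (mu (act k m)) k h"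
proof -
  interpret additive "gact k" using gact_additive[OF k] .
  have km: "act k m \<in> carrier Mv" using act_closed[OF k m] .
  have twist: "mu (act k m) \<otimes> k = k \<otimes> mu m" using mu_act_commute[OF k m] .
  have twist_h: "mu (act k m) \<otimes> (k \<otimes> h) = k \<otimes> (mu m \<otimes> h)"
    using twist km k m h by (metis G.m_assoc mu_closed)
  have lhs: "cm_d2 G Mv act mu rho z p n k m h g =
      (zM p - c (mu p) (mu n \<otimes> k) + c (mu n \<otimes> k) (mu m \<otimes> h))
    - (zM p + zM n - c (mu p) (mu n) - c (mu p \<otimes> mu n) k + c k (h \<otimes> g))
    + (zM n + (gact k (zM m) + c (mu (act k m)) k - c k (mu m)) - c (mu n) (mu (act k m))
         - c (mu n \<otimes> mu (act k m)) (k \<otimes> h) + c (k \<otimes> h) g)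
    - (gact k (zM m) - gact k (c (mu m) h) + gact k (c h g))"
    unfolding cm_d2_def
    using split[of p] split[of "p \<otimes>\<^bsub>Mv\<^esub> n"] split[of "n \<otimes>\<^bsub>Mv\<^esub> act k m"] split[of m h g]
      mult[OF p n] mult[OF n km] action[OF m k] p n k m h g km
    by (simp add: add diff)
  txt \<open>The Peiffer twists identify the group arguments; the rest is abelian group algebra.\<close>
  show ?thesis
    unfolding lhs \<delta>_def grp_d2_def c_def[symmetric]
    using p n k m h km by (simp add: twist twist_h algebra_simps)
qed

lemma conditions_imply_cocycle:
  fixes z :: "'m \<Rightarrow> 'g \<Rightarrow> 'g \<Rightarrow> 'a"
  assumes split: "\<forall>m \<in> carrier Mv. \<forall>h \<in> carrier G. \<forall>g \<in> carrier G.
      z m h g = cM G z m - cG Mv z (mu m) h + cG Mv z h g"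
    and group_cocycle: "grp_Z2 G gact (cG Mv z)"
    and mult: "\<forall>n \<in> carrier Mv. \<forall>m \<in> carrier Mv.
      cM G z (n \<otimes>\<^bsub>Mv\<^esub> m) = cM G z n + cM G z m - cG Mv z (mu n) (mu m)"
    and action: "\<forall>m \<in> carrier Mv. \<forall>g \<in> carrier G.
      cM G z (act g m) = gact g (cM G z m) + cG Mv z (mu (act g m)) g - cG Mv z g (mu m)"
  shows "cm_Z2 G Mv act mu rho z"
  unfolding cm_Z2_def
proof (intro ballI)
  fix p n k m h g
  assume p: "p \<in> carrier Mv" and n: "n \<in> carrier Mv" and k: "k \<in> carrier G"
    and m: "m \<in> carrier Mv" and h: "h \<in> carrier G" and g: "g \<in> carrier G"
  have km: "mu (act k m) \<in> carrier G" using act_closed[OF k m] by simp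
  have "\<And>r q s. \<lbrakk>r \<in> carrier G; q \<in> carrier G; s \<in> carrier G\<rbrakk> \<Longrightarrow>
      grp_d2 G gact (cG Mv z) r q s = 0"
    using group_cocycle by (simp add: grp_Z2_def)
  then show "cm_d2 G Mv act mu rho z p n k m h g = 0"
    using d2_as_group_coboundaries[of z p n k m h g] split mult action p n k m h g km
    by simp
qed

end

theorem proposition3p11:
  fixes G :: "('g, 'c) monoid_scheme" and Mv :: "('m, 'd) monoid_scheme"
    and act :: "'g \<Rightarrow> 'm \<Rightarrow> 'm" and mu :: "'m \<Rightarrow> 'g"
    and rho :: "'g set \<Rightarrow> 'a::ab_group_add \<Rightarrow> 'a"
    and z :: "'m \<Rightarrow> 'g \<Rightarrow> 'g \<Rightarrow> 'a"
  assumes "crossed_module G Mv act mu"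
    and "pi0_module G Mv mu rho"
  shows "cm_Z2 G Mv act mu rho z \<longleftrightarrow>
    (\<forall>m \<in> carrier Mv. \<forall>h \<in> carrier G. \<forall>g \<in> carrier G.
        z m h g = cM G z m - cG Mv z (mu m) h + cG Mv z h g)
    \<and> grp_Z2 G (\<lambda>g. rho (cls G Mv mu g)) (cG Mv z)
    \<and> (\<forall>n \<in> carrier Mv. \<forall>m \<in> carrier Mv.
        cM G z (n \<otimes>\<^bsub>Mv\<^esub> m) = cM G z n + cM G z m - cG Mv z (mu n) (mu m))
    \<and> (\<forall>m \<in> carrier Mv. \<forall>g \<in> carrier G.
        cM G z (act g m) = rho (cls G Mv mu g) (cM G z m)
          + cG Mv z (mu (act g m)) g - cG Mv z g (mu m))"
proof -
  interpret crossed_module_coefficients G Mv act mu rho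
    using assms by (simp add: crossed_module_coefficients_def
        crossed_module_coefficients_axioms_def)
  show ?thesis
  proof (intro iffI conjI ballI)
    assume cocycle: "cm_Z2 G Mv act mu rho z"
    show "z m h g = cM G z m - cG Mv z (mu m) h + cG Mv z h g"
      if "m \<in> carrier Mv" "h \<in> carrier G" "g \<in> carrier G" for m h g
      using cocycle_split[OF cocycle that] .
    show "grp_Z2 G gact (cG Mv z)"
      using cocycle_group_part[OF cocycle] .
    show "cM G z (n \<otimes>\<^bsub>Mv\<^esub> m) = cM G z n + cM G z m - cG Mv z (mu n) (mu m)"
      if "n \<in> carrier Mv" "m \<in> carrier Mv" for n m
      using cocycle_module_mult[OF cocycle that] .
    show "cM G z (act g m) = gact g (cM G z m) + cG Mv z (mu (act g m)) g - cG Mv z g (mu m)"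
      if "m \<in> carrier Mv" "g \<in> carrier G" for m g
      using cocycle_module_action[OF cocycle that] .
  qed (elim conjE, rule conditions_imply_cocycle; assumption)
qed

end
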